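(* Let $C$ be a coalgebra over a field $\Bbbk$. Then $C$ is left f-qcF if and only if every finite dimensional right coideal of $C$ embeds, as a left $C^*$-module, in a free left $C^*$-module.
   Context: The dual algebra $C^*$ has product $(fg)(x)=\sum f(x_1)g(x_2)$; a right $C$-comodule $M$ (coaction $m\mapsto\sum m_0\otimes m_1$) is a left $C^*$-module via $f\rightharpoonup m=\sum m_0f(m_1)$. A right coideal of $C$ is a subspace $I$ with $\Delta(I)\subseteq I\otimes C$ (a right $C$-subcomodule of $C$). $C$ is left f-qcF if every finite dimensional right $C$-comodule embeds, as a left $C^*$-module, in a free left $C^*$-module. *)

theory Defs
  imports Complex_Main "HOL-Library.Groups_Big_Fun" "HOL-Library.Function_Algebras"
begin

text \<open>
A coalgebra C over a field 'k is presented by a basis indexed by the type 'b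
(every vector space has a basis).  Elements of C are finitely supported
coordinate functions 'b \<Rightarrow> 'k.  The comultiplication is given by
structure constants: D b b1 b2 is the coefficient of e_b1 \<otimes> e_b2 in
\<Delta>(e_b); the counit is eps b = \<epsilon>(e_b).  C \<otimes> C is identified with
finitely supported functions on 'b \<times> 'b.  The dual algebra C* is the
set of all functions 'b \<Rightarrow> 'k (f b = f(e_b)).
\<close>

definition coalgebra :: "('b \<Rightarrow> 'b \<Rightarrow> 'b \<Rightarrow> 'k::field) \<Rightarrow> ('b \<Rightarrow> 'k) \<Rightarrow> bool" where
  "coalgebra D eps \<longleftrightarrow>
     (\<forall>b. finite {(b1, b2). D b b1 b2 \<noteq> 0}) \<and>
     \<comment> \<open>coassociativity: (\<Delta> \<otimes> id) \<Delta> = (id \<otimes> \<Delta>) \<Delta>\<close>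
     (\<forall>b x y z. (\<Sum>b1. D b b1 z * D b1 x y) = (\<Sum>b2. D b x b2 * D b2 y z)) \<and>
     \<comment> \<open>counit: (\<epsilon> \<otimes> id) \<Delta> = id = (id \<otimes> \<epsilon>) \<Delta>\<close>
     (\<forall>b b2. (\<Sum>b1. eps b1 * D b b1 b2) = (if b = b2 then 1 else 0)) \<and>
     (\<forall>b b1. (\<Sum>b2. D b b1 b2 * eps b2) = (if b = b1 then 1 else 0))"

definition C_elems :: "('b \<Rightarrow> 'k::field) set" where
  "C_elems = {x. finite {b. x b \<noteq> 0}}"

text \<open>Product of the dual algebra C*: (f g)(e_b) = \<Sum> f(b_1) g(b_2).\<close>
definition conv :: "('b \<Rightarrow> 'b \<Rightarrow> 'b \<Rightarrow> 'k::field) \<Rightarrow> ('b \<Rightarrow> 'k) \<Rightarrow> ('b \<Rightarrow> 'k) \<Rightarrow> ('b \<Rightarrow> 'k)" where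
  "conv D f g = (\<lambda>b. \<Sum>p. D b (fst p) (snd p) * f (fst p) * g (snd p))"

text \<open>
A right C-comodule of finite dimension n, presented with basis e_0,...,e_(n-1):
the coaction is \<rho>(e_i) = \<Sum>_(j<n) \<Sum>_b R i j b e_j \<otimes> e_b.
\<close>
definition fd_comodule :: "('b \<Rightarrow> 'b \<Rightarrow> 'b \<Rightarrow> 'k::field) \<Rightarrow> ('b \<Rightarrow> 'k) \<Rightarrow> nat \<Rightarrow> (nat \<Rightarrow> nat \<Rightarrow> 'b \<Rightarrow> 'k) \<Rightarrow> bool" where
  "fd_comodule D eps n R \<longleftrightarrow>
     (\<forall>i j b. (i \<ge> n \<or> j \<ge> n) \<longrightarrow> R i j b = 0) \<and>
     (\<forall>i j. finite {b. R i j b \<noteq> 0}) \<and>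
     \<comment> \<open>coassociativity: (\<rho> \<otimes> id) \<rho> = (id \<otimes> \<Delta>) \<rho>\<close>
     (\<forall>i k x y. (\<Sum>j<n. R i j y * R j k x) = (\<Sum>b. R i k b * D b x y)) \<and>
     \<comment> \<open>counit: (id \<otimes> \<epsilon>) \<rho> = id\<close>
     (\<forall>i<n. \<forall>j<n. (\<Sum>b. R i j b * eps b) = (if i = j then 1 else 0))"

definition fd_elems :: "nat \<Rightarrow> (nat \<Rightarrow> 'k::field) set" where
  "fd_elems n = {v. \<forall>i\<ge>n. v i = 0}"

text \<open>Left C*-action on a comodule: f \<rightharpoonup> m = \<Sum> m_0 f(m_1).\<close>
definition comod_act :: "nat \<Rightarrow> (nat \<Rightarrow> nat \<Rightarrow> 'b \<Rightarrow> 'k::field) \<Rightarrow> ('b \<Rightarrow> 'k) \<Rightarrow> (nat \<Rightarrow> 'k) \<Rightarrow> (nat \<Rightarrow> 'k)" where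
  "comod_act n R f v = (\<lambda>j. \<Sum>i<n. v i * (\<Sum>b. R i j b * f b))"

text \<open>Right coideals: subspaces I of C with \<Delta>(I) \<subseteq> I \<otimes> C
  (an element t of C \<otimes> C lies in I \<otimes> C iff each slice t(-, b2) lies in I).\<close>
definition right_coideal :: "('b \<Rightarrow> 'b \<Rightarrow> 'b \<Rightarrow> 'k::field) \<Rightarrow> ('b \<Rightarrow> 'k) set \<Rightarrow> bool" where
  "right_coideal D I \<longleftrightarrow>
     I \<subseteq> C_elems \<and> 0 \<in> I \<and>
     (\<forall>x\<in>I. \<forall>y\<in>I. x + y \<in> I) \<and> (\<forall>c. \<forall>x\<in>I. (\<lambda>b. c * x b) \<in> I) \<and>
     (\<forall>x\<in>I. \<forall>b2. (\<lambda>b1. \<Sum>b. x b * D b b1 b2) \<in> I)"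

definition fin_dim_subspace :: "('b \<Rightarrow> 'k::field) set \<Rightarrow> bool" where
  "fin_dim_subspace I \<longleftrightarrow>
     (\<exists>S. finite S \<and> S \<subseteq> I \<and> I = Modules.module.span (\<lambda>c x b. c * x b) S)"

text \<open>Left C*-action on C (as right C-comodule): f \<rightharpoonup> x = \<Sum> x_1 f(x_2).\<close>
definition coideal_act :: "('b \<Rightarrow> 'b \<Rightarrow> 'b \<Rightarrow> 'k::field) \<Rightarrow> ('b \<Rightarrow> 'k) \<Rightarrow> ('b \<Rightarrow> 'k) \<Rightarrow> ('b \<Rightarrow> 'k)" where
  "coideal_act D f x = (\<lambda>b1. \<Sum>p. x (fst p) * D (fst p) b1 (snd p) * f (snd p))"

text \<open>Free left C*-module with basis indexed by nat: finitely supported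
  families of elements of C*, with componentwise left multiplication.\<close>
definition free_elems :: "(nat \<Rightarrow> 'b \<Rightarrow> 'k::field) set" where
  "free_elems = {u. finite {i. u i \<noteq> 0}}"

definition free_act :: "('b \<Rightarrow> 'b \<Rightarrow> 'b \<Rightarrow> 'k::field) \<Rightarrow> ('b \<Rightarrow> 'k) \<Rightarrow> (nat \<Rightarrow> 'b \<Rightarrow> 'k) \<Rightarrow> (nat \<Rightarrow> 'b \<Rightarrow> 'k)" where
  "free_act D f u = (\<lambda>i. conv D f (u i))"

definition embeds_in_free :: "('b \<Rightarrow> 'b \<Rightarrow> 'b \<Rightarrow> 'k::field) \<Rightarrow> 'v::plus set \<Rightarrow> (('b \<Rightarrow> 'k) \<Rightarrow> 'v \<Rightarrow> 'v) \<Rightarrow> bool" where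
  "embeds_in_free D M act \<longleftrightarrow>
     (\<exists>\<phi>. (\<forall>x\<in>M. \<phi> x \<in> free_elems) \<and>
          (\<forall>x\<in>M. \<forall>y\<in>M. \<phi> (x + y) = \<phi> x + \<phi> y) \<and>
          (\<forall>f. \<forall>x\<in>M. \<phi> (act f x) = free_act D f (\<phi> x)) \<and>
          inj_on \<phi> M)"

definition left_f_qcF :: "('b \<Rightarrow> 'b \<Rightarrow> 'b \<Rightarrow> 'k::field) \<Rightarrow> ('b \<Rightarrow> 'k) \<Rightarrow> bool" where
  "left_f_qcF D eps \<longleftrightarrow>
     (\<forall>n R. fd_comodule D eps n R \<longrightarrow> embeds_in_free D (fd_elems n) (comod_act n R))"

end

theory Submission
  imports Defs "HOL-Library.Nat_Bijection"
begin

text \<open>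
  A finite dimensional comodule with coaction matrix R, i.e. rho(e_i) = sum_j e_j \<otimes> R_ij,
  embeds C*-linearly into I^n, where I is the span of the coefficients R_ij: send v to
  (sum_i v_i R_ij)_j.  Coassociativity of the comodule makes I a finite dimensional right
  coideal and this map C*-linear, and the counit makes it injective.  Since embeddability into
  free modules passes to finite powers and to submodules, the coideal condition implies f-qcF.
  Conversely a finite dimensional right coideal with basis e_0, ..., e_(n-1) is itself a finite
  dimensional comodule: expanding the slices of Delta(e_i) in that basis gives a coaction
  matrix, and the coordinate map is a C*-linear isomorphism.
\<close>

interpretation vec: vector_space "(\<lambda>c x b. c * x b) :: 'k::field \<Rightarrow> ('b \<Rightarrow> 'k) \<Rightarrow> ('b \<Rightarrow> 'k)"
  by unfold_locales (auto simp: fun_eq_iff algebra_simps)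

lemma sum_fun_apply: "(sum f A) x = (\<Sum>a\<in>A. f a x)"
  by (induct A rule: infinite_finite_induct) auto

lemma Sum_any_eq_sum:
  assumes "finite A" "\<And>a. a \<notin> A \<Longrightarrow> g a = 0"
  shows "Sum_any g = sum g A"
  using assms by (intro Sum_any.expand_superset) auto

lemma Sum_any_sum_commute:
  assumes "finite F" "\<And>i. i \<in> F \<Longrightarrow> finite {b. g i b \<noteq> 0}"
  shows "Sum_any (\<lambda>b. \<Sum>i\<in>F. g i b) = (\<Sum>i\<in>F. Sum_any (g i))"
proof -
  let ?T = "\<Union>i\<in>F. {b. g i b \<noteq> 0}"
  have fin: "finite ?T" using assms by auto
  have "Sum_any (\<lambda>b. \<Sum>i\<in>F. g i b) = (\<Sum>b\<in>?T. \<Sum>i\<in>F. g i b)"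
    by (rule Sum_any_eq_sum[OF fin]) (auto intro!: sum.neutral)
  also have "\<dots> = (\<Sum>i\<in>F. \<Sum>b\<in>?T. g i b)" by (rule sum.swap)
  also have "\<dots> = (\<Sum>i\<in>F. Sum_any (g i))"
    by (rule sum.cong[OF refl], rule Sum_any_eq_sum[OF fin, symmetric]) auto
  finally show ?thesis .
qed

lemma C_elems_subspace: "vec.subspace C_elems"
  unfolding vec.subspace_def C_elems_def
proof (intro conjI ballI allI)
  fix x y :: "'b \<Rightarrow> 'k::field" assume "x \<in> {x. finite {b. x b \<noteq> 0}}" "y \<in> {x. finite {b. x b \<noteq> 0}}"
  then show "x + y \<in> {x. finite {b. x b \<noteq> 0}}"
    by (auto intro: finite_subset[of _ "{b. x b \<noteq> 0} \<union> {b. y b \<noteq> 0}"])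
qed (auto intro: finite_subset)

subsection \<open>Embeddings into free C*-modules\<close>

lemma embeds_in_free_pullback:
  assumes "embeds_in_free D N act'"
    and "\<psi> ` M \<subseteq> N"
    and "\<And>x y. x \<in> M \<Longrightarrow> y \<in> M \<Longrightarrow> \<psi> (x + y) = \<psi> x + \<psi> y"
    and "\<And>f x. x \<in> M \<Longrightarrow> \<psi> (act f x) = act' f (\<psi> x)"
    and "inj_on \<psi> M"
  shows "embeds_in_free D M act"
proof -
  from assms(1) obtain \<phi> where
    free: "\<forall>x\<in>N. \<phi> x \<in> free_elems" and
    add: "\<forall>x\<in>N. \<forall>y\<in>N. \<phi> (x + y) = \<phi> x + \<phi> y" and
    act: "\<forall>f. \<forall>x\<in>N. \<phi> (act' f x) = free_act D f (\<phi> x)" and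
    inj: "inj_on \<phi> N"
    unfolding embeds_in_free_def by blast
  have "inj_on (\<phi> \<circ> \<psi>) M"
    using comp_inj_on[OF assms(5) inj_on_subset[OF inj assms(2)]] .
  with assms(2-4) free add act show ?thesis
    unfolding embeds_in_free_def by (intro exI[of _ "\<phi> \<circ> \<psi>"]) (auto simp: image_subset_iff)
qed

definition finite_power :: "nat \<Rightarrow> 'v::zero set \<Rightarrow> (nat \<Rightarrow> 'v) set" where
  "finite_power n N = {u. (\<forall>j. u j \<in> N) \<and> (\<forall>j\<ge>n. u j = 0)}"

lemma embeds_in_free_finite_power:
  fixes N :: "'v::monoid_add set"
  assumes "embeds_in_free D N act" and "0 \<in> N"
  shows "embeds_in_free D (finite_power n N) (\<lambda>f u j. act f (u j))"
proof -
  from assms(1) obtain \<phi> where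
    free: "\<forall>x\<in>N. \<phi> x \<in> free_elems" and
    add: "\<forall>x\<in>N. \<forall>y\<in>N. \<phi> (x + y) = \<phi> x + \<phi> y" and
    act: "\<forall>f. \<forall>x\<in>N. \<phi> (act f x) = free_act D f (\<phi> x)" and
    inj: "inj_on \<phi> N"
    unfolding embeds_in_free_def by blast
  have \<phi>_0: "\<phi> 0 = 0"
    using add assms(2) by (metis add.right_neutral add_left_imp_eq)
  define \<Phi> where "\<Phi> u = (\<lambda>m. \<phi> (u (fst (prod_decode m))) (snd (prod_decode m)))" for u :: "nat \<Rightarrow> 'v"
  show ?thesis
    unfolding embeds_in_free_def
  proof (intro exI[of _ \<Phi>] conjI ballI allI)
    fix u assume u: "u \<in> finite_power n N"
    let ?A = "prod_encode ` (\<Union>j<n. {j} \<times> {k. \<phi> (u j) k \<noteq> 0})"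
    have "{m. \<Phi> u m \<noteq> 0} \<subseteq> ?A"
    proof
      fix m assume m: "m \<in> {m. \<Phi> u m \<noteq> 0}"
      obtain j k where jk: "prod_decode m = (j, k)" by fastforce
      then have "j < n" using m u \<phi>_0 by (auto simp: \<Phi>_def finite_power_def not_less[symmetric])
      moreover have "m = prod_encode (j, k)" using jk by (metis prod_decode_inverse)
      ultimately show "m \<in> ?A" using m jk by (auto simp: \<Phi>_def)
    qed
    moreover have "finite ?A" using u free by (auto simp: free_elems_def finite_power_def)
    ultimately show "\<Phi> u \<in> free_elems" by (auto simp: free_elems_def intro: finite_subset)
  next
    fix u w assume "u \<in> finite_power n N" "w \<in> finite_power n N"
    then show "\<Phi> (u + w) = \<Phi> u + \<Phi> w"
      using add by (simp add: \<Phi>_def fun_eq_iff finite_power_def)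
  next
    fix f u assume "u \<in> finite_power n N"
    then show "\<Phi> (\<lambda>j. act f (u j)) = free_act D f (\<Phi> u)"
      using act by (simp add: \<Phi>_def fun_eq_iff finite_power_def free_act_def)
  next
    show "inj_on \<Phi> (finite_power n N)"
    proof (rule inj_onI)
      fix u w assume u: "u \<in> finite_power n N" and w: "w \<in> finite_power n N" and eq: "\<Phi> u = \<Phi> w"
      have "\<phi> (u j) = \<phi> (w j)" for j
        using fun_cong[OF eq, of "prod_encode (j, _)"] by (auto simp: \<Phi>_def fun_eq_iff)
      with u w show "u = w"
        unfolding finite_power_def by (auto simp: inj_on_eq_iff[OF inj])
    qed
  qed
qed

subsection \<open>Slices of the comultiplication\<close>

text \<open>Delta(x) = sum_c comult_slice D x c \<otimes> e_c; thus right_coideal asks that I contain all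
  slices of its elements, and f acts on x by sum_c f(e_c) comult_slice D x c.\<close>

definition comult_slice :: "('b \<Rightarrow> 'b \<Rightarrow> 'b \<Rightarrow> 'k::field) \<Rightarrow> ('b \<Rightarrow> 'k) \<Rightarrow> 'b \<Rightarrow> 'b \<Rightarrow> 'k" where
  "comult_slice D x c = (\<lambda>b1. \<Sum>b. x b * D b b1 c)"

definition comult_left_support :: "('b \<Rightarrow> 'b \<Rightarrow> 'b \<Rightarrow> 'k::field) \<Rightarrow> 'b set \<Rightarrow> 'b set" where
  "comult_left_support D T = {b1. \<exists>b\<in>T. \<exists>b2. D b b1 b2 \<noteq> 0}"

definition comult_right_support :: "('b \<Rightarrow> 'b \<Rightarrow> 'b \<Rightarrow> 'k::field) \<Rightarrow> 'b set \<Rightarrow> 'b set" where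
  "comult_right_support D T = {b2. \<exists>b\<in>T. \<exists>b1. D b b1 b2 \<noteq> 0}"

lemma comult_slice_eq_sum:
  assumes "finite T" "\<And>b. b \<notin> T \<Longrightarrow> x b = 0"
  shows "comult_slice D x c b1 = (\<Sum>b\<in>T. x b * D b b1 c)"
  unfolding comult_slice_def using assms by (intro Sum_any_eq_sum) auto

lemma comult_slice_zero: "comult_slice D 0 c = 0"
  unfolding comult_slice_def by (simp add: fun_eq_iff)

lemma comult_slice_add:
  assumes "x \<in> C_elems" "y \<in> C_elems"
  shows "comult_slice D (x + y) c = comult_slice D x c + comult_slice D y c"
proof
  fix b1
  have "finite {b. x b * D b b1 c \<noteq> 0}" "finite {b. y b * D b b1 c \<noteq> 0}"
    using assms by (auto simp: C_elems_def intro: finite_subset)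
  then show "comult_slice D (x + y) c b1 = (comult_slice D x c + comult_slice D y c) b1"
    unfolding comult_slice_def by (simp add: distrib_right Sum_any.distrib)
qed

lemma comult_slice_scale:
  assumes "x \<in> C_elems"
  shows "comult_slice D (\<lambda>b. a * x b) c = (\<lambda>b1. a * comult_slice D x c b1)"
proof
  fix b1
  have "finite {b. x b * D b b1 c \<noteq> 0}"
    using assms by (auto simp: C_elems_def intro: finite_subset)
  then show "comult_slice D (\<lambda>b. a * x b) c b1 = a * comult_slice D x c b1"
    unfolding comult_slice_def by (simp add: Sum_any_right_distrib mult_ac)
qed

locale coalg =
  fixes D :: "'b \<Rightarrow> 'b \<Rightarrow> 'b \<Rightarrow> 'k::field" and eps :: "'b \<Rightarrow> 'k"
  assumes coalgebra: "coalgebra D eps"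
begin

lemma comult_finite: "finite {(b1, b2). D b b1 b2 \<noteq> 0}"
  using coalgebra by (simp add: coalgebra_def)

lemma coassoc: "Sum_any (\<lambda>b1. D b b1 z * D b1 x y) = Sum_any (\<lambda>b2. D b x b2 * D b2 y z)"
  using coalgebra by (simp add: coalgebra_def)

lemma counit_right: "Sum_any (\<lambda>b2. D b b1 b2 * eps b2) = (if b = b1 then 1 else 0)"
  using coalgebra by (simp add: coalgebra_def)

lemma finite_comult_left_support: "finite T \<Longrightarrow> finite (comult_left_support D T)"
  unfolding comult_left_support_def
  by (rule finite_subset[of _ "\<Union>b\<in>T. fst ` {(b1, b2). D b b1 b2 \<noteq> 0}"])
    (force, use comult_finite in auto)

lemma finite_comult_right_support: "finite T \<Longrightarrow> finite (comult_right_support D T)"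
  unfolding comult_right_support_def
  by (rule finite_subset[of _ "\<Union>b\<in>T. snd ` {(b1, b2). D b b1 b2 \<noteq> 0}"])
    (force, use comult_finite in auto)

context
  fixes T :: "'b set" and x :: "'b \<Rightarrow> 'k"
  assumes fin: "finite T" and supp: "\<And>b. b \<notin> T \<Longrightarrow> x b = 0"
begin

lemma comult_slice_outside: "c \<notin> comult_right_support D T \<Longrightarrow> comult_slice D x c = 0"
  by (auto simp: fun_eq_iff comult_slice_eq_sum[OF fin supp] comult_right_support_def intro!: sum.neutral)

lemma coideal_act_eq_sum:
  assumes "finite U" "comult_right_support D T \<subseteq> U"
  shows "coideal_act D f x b1 = (\<Sum>c\<in>U. f c * comult_slice D x c b1)"
proof -
  have "coideal_act D f x b1 = (\<Sum>p\<in>T \<times> U. x (fst p) * D (fst p) b1 (snd p) * f (snd p))"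
    unfolding coideal_act_def
  proof (rule Sum_any_eq_sum)
    fix p assume p: "p \<notin> T \<times> U"
    show "x (fst p) * D (fst p) b1 (snd p) * f (snd p) = 0"
    proof (cases "fst p \<in> T")
      case True
      then have "snd p \<notin> comult_right_support D T" using p assms(2) by (cases p) auto
      then show ?thesis using True unfolding comult_right_support_def by auto
    qed (simp add: supp)
  qed (use fin assms in auto)
  also have "\<dots> = (\<Sum>b\<in>T. \<Sum>c\<in>U. x b * D b b1 c * f c)"
    by (simp add: sum.cartesian_product split_def)
  also have "\<dots> = (\<Sum>c\<in>U. \<Sum>b\<in>T. x b * D b b1 c * f c)"
    by (rule sum.swap)
  also have "\<dots> = (\<Sum>c\<in>U. f c * comult_slice D x c b1)"
    by (simp add: comult_slice_eq_sum[OF fin supp] sum_distrib_left mult_ac)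
  finally show ?thesis .
qed

text \<open>Coassociativity (id \<otimes> Delta) Delta = (Delta \<otimes> id) Delta, read off on slices.\<close>

lemma comult_slice_comult_slice:
  "comult_slice D (comult_slice D x y) z c
     = (\<Sum>b\<in>comult_right_support D T. D b z y * comult_slice D x b c)"
proof -
  let ?L = "comult_left_support D T" and ?S = "comult_right_support D T"
  have finL: "finite ?L" and finS: "finite ?S"
    using fin by (simp_all add: finite_comult_left_support finite_comult_right_support)
  have outside: "comult_slice D x y b' = 0" if "b' \<notin> ?L" for b'
    using that by (auto simp: comult_slice_eq_sum[OF fin supp] comult_left_support_def intro!: sum.neutral)
  have inner: "(\<Sum>b'\<in>?L. D b b' y * D b' c z) = (\<Sum>b2\<in>?S. D b c b2 * D b2 z y)"
    if "b \<in> T" for b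
  proof -
    have "(\<Sum>b'\<in>?L. D b b' y * D b' c z) = Sum_any (\<lambda>b1. D b b1 y * D b1 c z)"
      by (rule Sum_any_eq_sum[OF finL, symmetric]) (use that in \<open>auto simp: comult_left_support_def\<close>)
    also have "\<dots> = Sum_any (\<lambda>b2. D b c b2 * D b2 z y)" by (rule coassoc)
    also have "\<dots> = (\<Sum>b2\<in>?S. D b c b2 * D b2 z y)"
      by (rule Sum_any_eq_sum[OF finS]) (use that in \<open>auto simp: comult_right_support_def\<close>)
    finally show ?thesis .
  qed
  have "comult_slice D (comult_slice D x y) z c = (\<Sum>b'\<in>?L. comult_slice D x y b' * D b' c z)"
    by (rule comult_slice_eq_sum[OF finL outside])
  also have "\<dots> = (\<Sum>b'\<in>?L. \<Sum>b\<in>T. x b * (D b b' y * D b' c z))"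
    by (simp add: comult_slice_eq_sum[OF fin supp] sum_distrib_left mult_ac)
  also have "\<dots> = (\<Sum>b\<in>T. x b * (\<Sum>b'\<in>?L. D b b' y * D b' c z))"
    by (simp add: sum.swap[of _ ?L] sum_distrib_left)
  also have "\<dots> = (\<Sum>b\<in>T. \<Sum>b2\<in>?S. D b2 z y * (x b * D b c b2))"
    by (rule sum.cong[OF refl]) (simp add: inner sum_distrib_left mult_ac)
  also have "\<dots> = (\<Sum>b\<in>?S. D b z y * comult_slice D x b c)"
    by (simp add: sum.swap[of _ T] comult_slice_eq_sum[OF fin supp] sum_distrib_left)
  finally show ?thesis .
qed

lemma counit_comult_slice: "(\<Sum>b\<in>comult_right_support D T. eps b * comult_slice D x b c) = x c"
proof -
  let ?S = "comult_right_support D T"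
  have finS: "finite ?S" using fin by (rule finite_comult_right_support)
  have inner: "(\<Sum>b\<in>?S. D b' c b * eps b) = (if b' = c then 1 else 0)" if "b' \<in> T" for b'
  proof -
    have "(\<Sum>b\<in>?S. D b' c b * eps b) = Sum_any (\<lambda>b2. D b' c b2 * eps b2)"
      by (rule Sum_any_eq_sum[OF finS, symmetric]) (use that in \<open>auto simp: comult_right_support_def\<close>)
    then show ?thesis by (simp add: counit_right)
  qed
  have "(\<Sum>b\<in>?S. eps b * comult_slice D x b c) = (\<Sum>b'\<in>T. x b' * (\<Sum>b\<in>?S. D b' c b * eps b))"
    by (simp add: comult_slice_eq_sum[OF fin supp] sum_distrib_left sum.swap[of _ ?S] mult_ac)
  also have "\<dots> = (\<Sum>b'\<in>T. if b' = c then x b' else 0)"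
    by (rule sum.cong[OF refl]) (simp add: inner)
  also have "\<dots> = x c"
    using fin supp by (cases "c \<in> T") auto
  finally show ?thesis .
qed

end

end

subsection \<open>The coefficient space of a finite dimensional comodule\<close>

definition coefficient_space :: "nat \<Rightarrow> (nat \<Rightarrow> nat \<Rightarrow> 'b \<Rightarrow> 'k::field) \<Rightarrow> ('b \<Rightarrow> 'k) set" where
  "coefficient_space n R = vec.span ((\<lambda>(i, j). R i j) ` ({..<n} \<times> {..<n}))"

definition coefficient_embedding ::
    "nat \<Rightarrow> (nat \<Rightarrow> nat \<Rightarrow> 'b \<Rightarrow> 'k::field) \<Rightarrow> (nat \<Rightarrow> 'k) \<Rightarrow> nat \<Rightarrow> 'b \<Rightarrow> 'k" where
  "coefficient_embedding n R v j = (\<lambda>b. \<Sum>i<n. v i * R i j b)"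

locale fd_comod = coalg +
  fixes n :: nat and R :: "nat \<Rightarrow> nat \<Rightarrow> 'b \<Rightarrow> 'k::field"
  assumes fd_comodule: "fd_comodule D eps n R"
begin

lemma coaction_vanishes: "n \<le> i \<or> n \<le> j \<Longrightarrow> R i j b = 0"
  using fd_comodule unfolding fd_comodule_def by blast

lemma coaction_finite: "finite {b. R i j b \<noteq> 0}"
  using fd_comodule by (simp add: fd_comodule_def)

lemma coaction_coassoc: "(\<Sum>j<n. R i j y * R j k x) = Sum_any (\<lambda>b. R i k b * D b x y)"
  using fd_comodule by (simp add: fd_comodule_def)

lemma coaction_counit: "i < n \<Longrightarrow> j < n \<Longrightarrow> Sum_any (\<lambda>b. R i j b * eps b) = (if i = j then 1 else 0)"
  using fd_comodule by (simp add: fd_comodule_def)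

definition coaction_support :: "'b set" where
  "coaction_support = {b. \<exists>i j. R i j b \<noteq> 0}"

lemma finite_coaction_support: "finite coaction_support"
proof -
  have "coaction_support \<subseteq> (\<Union>i<n. \<Union>j<n. {b. R i j b \<noteq> 0})"
  proof
    fix b assume "b \<in> coaction_support"
    then obtain i j where "R i j b \<noteq> 0" by (auto simp: coaction_support_def)
    moreover from this have "i < n" "j < n" using coaction_vanishes not_le by blast+
    ultimately show "b \<in> (\<Union>i<n. \<Union>j<n. {b. R i j b \<noteq> 0})" by blast
  qed
  then show ?thesis using coaction_finite by (auto intro: finite_subset)
qed

lemma coaction_outside_support: "b \<notin> coaction_support \<Longrightarrow> R i j b = 0"
  unfolding coaction_support_def by auto

lemma coaction_in_coefficient_space: "R i j \<in> coefficient_space n R"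
proof (cases "i < n \<and> j < n")
  case False
  then have "R i j = 0" using coaction_vanishes by (auto simp: fun_eq_iff not_less)
  then show ?thesis by (simp add: coefficient_space_def vec.span_zero)
qed (auto simp: coefficient_space_def intro: vec.span_base)

lemma comult_slice_coaction: "comult_slice D (R i j) c = (\<Sum>k<n. (\<lambda>b1. R i k c * R k j b1))"
  by (simp add: fun_eq_iff sum_fun_apply comult_slice_def coaction_coassoc)

lemma coefficient_space_slices:
  "coefficient_space n R \<subseteq> {x \<in> C_elems. \<forall>c. comult_slice D x c \<in> coefficient_space n R}"
  unfolding coefficient_space_def
proof (rule vec.span_minimal)
  show "(\<lambda>(i, j). R i j) ` ({..<n} \<times> {..<n})
      \<subseteq> {x \<in> C_elems. \<forall>c. comult_slice D x c \<in> vec.span ((\<lambda>(i, j). R i j) ` ({..<n} \<times> {..<n}))}"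
    using coaction_finite coaction_in_coefficient_space
    by (auto simp: C_elems_def comult_slice_coaction coefficient_space_def
        intro!: vec.span_sum vec.span_scale)
  show "vec.subspace {x \<in> C_elems. \<forall>c. comult_slice D x c \<in> vec.span ((\<lambda>(i, j). R i j) ` ({..<n} \<times> {..<n}))}"
    using C_elems_subspace unfolding vec.subspace_def
    by (auto simp: comult_slice_zero comult_slice_add comult_slice_scale
        vec.span_zero vec.span_add vec.span_scale)
qed

lemma right_coideal_coefficient_space: "right_coideal D (coefficient_space n R)"
  using coefficient_space_slices
  unfolding right_coideal_def comult_slice_def[symmetric] coefficient_space_def
  by (auto simp: vec.span_zero vec.span_add vec.span_scale)

lemma fin_dim_coefficient_space: "fin_dim_subspace (coefficient_space n R)"
  unfolding fin_dim_subspace_def coefficient_space_def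
  by (auto intro!: exI[of _ "(\<lambda>(i, j). R i j) ` ({..<n} \<times> {..<n})"] vec.span_superset)

lemma coefficient_embedding_in_coefficient_space:
  "coefficient_embedding n R v j \<in> coefficient_space n R"
proof -
  have eq: "coefficient_embedding n R v j = (\<Sum>i<n. (\<lambda>b. v i * R i j b))"
    by (simp add: coefficient_embedding_def fun_eq_iff sum_fun_apply)
  show ?thesis
    unfolding eq coefficient_space_def
    by (intro vec.span_sum vec.span_scale coaction_in_coefficient_space[unfolded coefficient_space_def])
qed

lemma coefficient_embedding_vanishes: "n \<le> j \<Longrightarrow> coefficient_embedding n R v j = 0"
  by (simp add: coefficient_embedding_def coaction_vanishes fun_eq_iff)

lemma comult_slice_coefficient_embedding:
  "comult_slice D (coefficient_embedding n R v j) c b1 = (\<Sum>i<n. \<Sum>k<n. v i * R i k c * R k j b1)"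
proof -
  have "comult_slice D (coefficient_embedding n R v j) c b1
      = (\<Sum>b\<in>coaction_support. coefficient_embedding n R v j b * D b b1 c)"
    by (rule comult_slice_eq_sum[OF finite_coaction_support])
      (simp add: coefficient_embedding_def coaction_outside_support)
  also have "\<dots> = (\<Sum>i<n. v i * comult_slice D (R i j) c b1)"
    by (simp add: coefficient_embedding_def comult_slice_eq_sum[OF finite_coaction_support]
        coaction_outside_support sum_distrib_left sum_distrib_right mult_ac sum.swap[of _ coaction_support])
  finally show ?thesis
    by (simp add: comult_slice_coaction sum_fun_apply sum_distrib_left mult_ac)
qed

lemma coefficient_embedding_act:
  "coefficient_embedding n R (comod_act n R f v) j = coideal_act D f (coefficient_embedding n R v j)"
proof
  fix b1
  let ?U = "coaction_support \<union> comult_right_support D coaction_support"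
  have finU: "finite ?U"
    using finite_coaction_support finite_comult_right_support by simp
  have eval: "Sum_any (\<lambda>b. R i k b * f b) = (\<Sum>c\<in>?U. R i k c * f c)" for i k
    by (rule Sum_any_eq_sum[OF finU]) (simp add: coaction_outside_support)
  have "coefficient_embedding n R (comod_act n R f v) j b1
      = (\<Sum>k<n. \<Sum>i<n. \<Sum>c\<in>?U. f c * v i * R i k c * R k j b1)"
    unfolding coefficient_embedding_def comod_act_def eval
    by (simp add: sum_distrib_left sum_distrib_right mult_ac)
  also have "\<dots> = (\<Sum>i<n. \<Sum>k<n. \<Sum>c\<in>?U. f c * v i * R i k c * R k j b1)"
    by (rule sum.swap)
  also have "\<dots> = (\<Sum>i<n. \<Sum>c\<in>?U. \<Sum>k<n. f c * v i * R i k c * R k j b1)"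
    by (rule sum.cong[OF refl], rule sum.swap)
  also have "\<dots> = (\<Sum>c\<in>?U. \<Sum>i<n. \<Sum>k<n. f c * v i * R i k c * R k j b1)"
    by (rule sum.swap)
  also have "\<dots> = (\<Sum>c\<in>?U. f c * comult_slice D (coefficient_embedding n R v j) c b1)"
    by (simp add: comult_slice_coefficient_embedding sum_distrib_left mult_ac)
  also have "\<dots> = coideal_act D f (coefficient_embedding n R v j) b1"
    by (rule coideal_act_eq_sum[OF finite_coaction_support _ finU, symmetric])
      (auto simp: coefficient_embedding_def coaction_outside_support)
  finally show "coefficient_embedding n R (comod_act n R f v) j b1
      = coideal_act D f (coefficient_embedding n R v j) b1" .
qed

lemma counit_coefficient_embedding:
  assumes "j < n"
  shows "Sum_any (\<lambda>b. coefficient_embedding n R v j b * eps b) = v j"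
proof -
  have "Sum_any (\<lambda>b. coefficient_embedding n R v j b * eps b)
      = (\<Sum>i<n. Sum_any (\<lambda>b. v i * (R i j b * eps b)))"
    unfolding coefficient_embedding_def sum_distrib_right mult.assoc
    by (rule Sum_any_sum_commute) (auto intro: finite_subset[OF _ coaction_finite])
  also have "\<dots> = (\<Sum>i<n. if i = j then v i else 0)"
  proof (rule sum.cong[OF refl])
    fix i assume "i \<in> {..<n}"
    have "finite {b. R i j b * eps b \<noteq> 0}" by (rule finite_subset[OF _ coaction_finite]) auto
    with \<open>i \<in> {..<n}\<close> assms show "Sum_any (\<lambda>b. v i * (R i j b * eps b)) = (if i = j then v i else 0)"
      by (simp add: Sum_any_right_distrib[symmetric] coaction_counit)
  qed
  finally show ?thesis using assms by simp
qed

lemma inj_on_coefficient_embedding: "inj_on (coefficient_embedding n R) (fd_elems n)"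
proof (rule inj_onI)
  fix v w assume "v \<in> fd_elems n" "w \<in> fd_elems n"
    and eq: "coefficient_embedding n R v = coefficient_embedding n R w"
  show "v = w"
  proof
    fix j
    show "v j = w j"
    proof (cases "j < n")
      case True
      then show ?thesis
        using counit_coefficient_embedding[of j v] counit_coefficient_embedding[of j w] eq by simp
    qed (use \<open>v \<in> fd_elems n\<close> \<open>w \<in> fd_elems n\<close> in \<open>simp add: fd_elems_def\<close>)
  qed
qed

lemma embeds_in_free_comodule:
  assumes "embeds_in_free D (coefficient_space n R) (coideal_act D)"
  shows "embeds_in_free D (fd_elems n) (comod_act n R)"
proof (rule embeds_in_free_pullback)
  show "embeds_in_free D (finite_power n (coefficient_space n R)) (\<lambda>f u j. coideal_act D f (u j))"
    using assms by (rule embeds_in_free_finite_power) (simp add: coefficient_space_def vec.span_zero)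
  show "coefficient_embedding n R ` fd_elems n \<subseteq> finite_power n (coefficient_space n R)"
    by (auto simp: finite_power_def coefficient_embedding_in_coefficient_space
        coefficient_embedding_vanishes)
  show "coefficient_embedding n R (v + w) = coefficient_embedding n R v + coefficient_embedding n R w"
    for v w
    by (simp add: coefficient_embedding_def fun_eq_iff distrib_right sum.distrib)
qed (simp_all add: coefficient_embedding_act inj_on_coefficient_embedding fun_eq_iff)

end

subsection \<open>A finite dimensional right coideal is a finite dimensional comodule\<close>

lemma fin_dim_subspace_obtain_basis:
  assumes "fin_dim_subspace (I :: ('b \<Rightarrow> 'k::field) set)"
  obtains n :: nat and e where
    "I = vec.span (e ` {..<n})" "inj_on e {..<n}" "vec.independent (e ` {..<n})"
proof -
  obtain S where S: "finite S" "I = vec.span S"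
    using assms unfolding fin_dim_subspace_def by blast
  obtain B where B: "B \<subseteq> S" "vec.independent B" "S \<subseteq> vec.span B"
    by (rule vec.maximal_independent_subset)
  obtain e where e: "bij_betw e {..<card B} B"
    using ex_bij_betw_nat_finite[OF finite_subset[OF B(1) S(1)]] by (auto simp: atLeast0LessThan)
  have "I = vec.span B"
    using S(2) B by (metis vec.span_mono vec.span_span subset_antisym)
  with e B(2) show thesis
    by (intro that[of e "card B"]) (auto simp: bij_betw_def)
qed

locale coideal_basis = coalg +
  fixes I :: "('b \<Rightarrow> 'k::field) set" and n :: nat and e :: "nat \<Rightarrow> 'b \<Rightarrow> 'k"
  assumes right_coideal: "right_coideal D I"
    and span_basis: "I = vec.span (e ` {..<n})"
    and inj_basis: "inj_on e {..<n}"
    and independent_basis: "vec.independent (e ` {..<n})"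
begin

definition combination :: "(nat \<Rightarrow> 'k) \<Rightarrow> 'b \<Rightarrow> 'k" where
  "combination v = (\<lambda>b. \<Sum>i<n. v i * e i b)"

definition basis_support :: "'b set" where
  "basis_support = {b. \<exists>i<n. e i b \<noteq> 0}"

lemma basis_in_coideal: "i < n \<Longrightarrow> e i \<in> I"
  unfolding span_basis by (rule vec.span_base) auto

lemma finite_basis_support: "finite basis_support"
proof -
  have "basis_support = (\<Union>i<n. {b. e i b \<noteq> 0})" by (auto simp: basis_support_def)
  then show ?thesis
    using basis_in_coideal right_coideal by (auto simp: right_coideal_def C_elems_def)
qed

lemma basis_outside_support: "i < n \<Longrightarrow> b \<notin> basis_support \<Longrightarrow> e i b = 0"
  by (auto simp: basis_support_def)

lemma combination_outside_support: "b \<notin> basis_support \<Longrightarrow> combination v b = 0"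
  by (simp add: combination_def basis_outside_support)

lemma combination_eq_sum: "combination v = (\<Sum>i<n. (\<lambda>b. v i * e i b))"
  by (simp add: combination_def fun_eq_iff sum_fun_apply)

lemma combination_add: "combination (v + w) = combination v + combination w"
  by (simp add: combination_def fun_eq_iff distrib_right sum.distrib)

lemma bij_betw_combination: "bij_betw combination (fd_elems n) I"
proof (rule bij_betw_imageI)
  show "inj_on combination (fd_elems n)"
  proof (rule inj_onI)
    fix v w assume v: "v \<in> fd_elems n" and w: "w \<in> fd_elems n" and eq: "combination v = combination w"
    define g where "g y = (v - w) (the_inv_into {..<n} e y)" for y
    have "(\<Sum>y\<in>e ` {..<n}. (\<lambda>b. g y * y b)) = combination v - combination w"
      by (simp add: sum.reindex[OF inj_basis] g_def the_inv_into_f_f[OF inj_basis] combination_def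
          fun_eq_iff sum_fun_apply left_diff_distrib sum_subtractf)
    then have "g (e j) = 0" if "j < n" for j
      using vec.independentD[OF independent_basis, of "e ` {..<n}" g "e j"] that eq by simp
    then have "v j = w j" if "j < n" for j
      using that by (simp add: g_def the_inv_into_f_f[OF inj_basis])
    with v w show "v = w"
      unfolding fd_elems_def by (auto simp: fun_eq_iff) (metis not_le)
  qed
  show "combination ` fd_elems n = I"
  proof
    show "combination ` fd_elems n \<subseteq> I"
      using basis_in_coideal unfolding span_basis combination_eq_sum
      by (auto intro!: vec.span_sum vec.span_scale)
    show "I \<subseteq> combination ` fd_elems n"
    proof
      fix x assume "x \<in> I"
      then obtain c where "x = (\<Sum>y\<in>e ` {..<n}. (\<lambda>b. c y * y b))"
        unfolding span_basis vec.span_finite[OF finite_imageI[OF finite_lessThan]] by auto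
      also have "\<dots> = combination (\<lambda>i. if i < n then c (e i) else 0)"
        unfolding combination_eq_sum sum.reindex[OF inj_basis] by (rule sum.cong) auto
      finally show "x \<in> combination ` fd_elems n" by (auto simp: fd_elems_def)
    qed
  qed
qed

definition coords :: "('b \<Rightarrow> 'k) \<Rightarrow> nat \<Rightarrow> 'k" where
  "coords = the_inv_into (fd_elems n) combination"

lemma coords_in_fd_elems: "x \<in> I \<Longrightarrow> coords x \<in> fd_elems n"
  unfolding coords_def using bij_betw_combination by (metis bij_betw_def the_inv_into_into subset_refl)

lemma combination_coords: "x \<in> I \<Longrightarrow> combination (coords x) = x"
  unfolding coords_def using bij_betw_combination by (metis bij_betw_def f_the_inv_into_f)

lemma coords_combination: "v \<in> fd_elems n \<Longrightarrow> coords (combination v) = v"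
  unfolding coords_def using bij_betw_combination by (metis bij_betw_def the_inv_into_f_f)

text \<open>Delta(e_i) = sum_j e_j \<otimes> (sum_b coaction i j b e_b): the comultiplication restricted
  to I, written in the basis e.\<close>

definition coaction :: "nat \<Rightarrow> nat \<Rightarrow> 'b \<Rightarrow> 'k" where
  "coaction i j b = (if i < n \<and> j < n then coords (comult_slice D (e i) b) j else 0)"

lemma comult_slice_basis_in_coideal: "i < n \<Longrightarrow> comult_slice D (e i) b \<in> I"
  using right_coideal basis_in_coideal unfolding right_coideal_def comult_slice_def by blast

lemma comult_slice_basis: "i < n \<Longrightarrow> comult_slice D (e i) b = combination (\<lambda>j. coaction i j b)"
proof -
  assume i: "i < n"
  have "(\<lambda>j. coaction i j b) = coords (comult_slice D (e i) b)"
    using coords_in_fd_elems[OF comult_slice_basis_in_coideal[OF i]] i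
    by (auto simp: coaction_def fun_eq_iff fd_elems_def not_less)
  then show ?thesis using combination_coords[OF comult_slice_basis_in_coideal[OF i]] by simp
qed

lemma comult_slice_basis_apply:
  "i < n \<Longrightarrow> comult_slice D (e i) b c = (\<Sum>j<n. coaction i j b * e j c)"
  by (simp add: comult_slice_basis combination_def)

lemma coaction_vanishes: "n \<le> i \<or> n \<le> j \<Longrightarrow> coaction i j b = 0"
  by (auto simp: coaction_def)

abbreviation coaction_support :: "'b set" where
  "coaction_support \<equiv> comult_right_support D basis_support"

lemma finite_coaction_support: "finite coaction_support"
  by (rule finite_comult_right_support[OF finite_basis_support])

lemma coaction_outside_support: "b \<notin> coaction_support \<Longrightarrow> coaction i j b = 0"
proof (cases "i < n")
  case True
  assume "b \<notin> coaction_support"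
  then have "comult_slice D (e i) b = combination 0"
    using comult_slice_outside[OF finite_basis_support basis_outside_support[OF True]]
    by (simp add: combination_def fun_eq_iff)
  have "(\<lambda>j. coaction i j b) = coords (combination (\<lambda>j. coaction i j b))"
    by (rule coords_combination[symmetric]) (simp add: fd_elems_def coaction_vanishes)
  also have "\<dots> = coords (combination 0)"
    using comult_slice_basis[OF True] \<open>comult_slice D (e i) b = combination 0\<close> by simp
  also have "\<dots> = 0"
    by (rule coords_combination) (simp add: fd_elems_def)
  finally show ?thesis by (simp add: fun_eq_iff)
qed (simp add: coaction_def)

lemma Sum_any_coaction: "Sum_any (\<lambda>b. coaction i k b * g b) = (\<Sum>b\<in>coaction_support. coaction i k b * g b)"
  by (rule Sum_any_eq_sum[OF finite_coaction_support]) (simp add: coaction_outside_support)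

lemma comult_slice_combination:
  "comult_slice D (combination v) x c = (\<Sum>i<n. v i * comult_slice D (e i) x c)"
proof -
  have "comult_slice D (combination v) x c = (\<Sum>b\<in>basis_support. combination v b * D b c x)"
    by (rule comult_slice_eq_sum[OF finite_basis_support combination_outside_support])
  also have "\<dots> = (\<Sum>i<n. v i * (\<Sum>b\<in>basis_support. e i b * D b c x))"
    by (simp add: combination_def sum_distrib_left sum_distrib_right mult_ac sum.swap[of _ basis_support])
  also have "\<dots> = (\<Sum>i<n. v i * comult_slice D (e i) x c)"
    by (simp add: comult_slice_eq_sum[OF finite_basis_support basis_outside_support])
  finally show ?thesis .
qed

lemma coaction_coassoc: "(\<Sum>j<n. coaction i j y * coaction j k x) = Sum_any (\<lambda>b. coaction i k b * D b x y)"
proof (cases "i < n")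
  case False
  then show ?thesis by (simp add: coaction_vanishes)
next
  case i: True
  define u where "u k = (\<Sum>j<n. coaction i j y * coaction j k x)" for k
  define w where "w k = Sum_any (\<lambda>b. coaction i k b * D b x y)" for k
  have "combination u c = comult_slice D (comult_slice D (e i) y) x c" for c
  proof -
    have "combination u c = (\<Sum>k<n. \<Sum>j<n. coaction i j y * (coaction j k x * e k c))"
      by (simp add: combination_def u_def sum_distrib_left sum_distrib_right mult_ac)
    also have "\<dots> = (\<Sum>j<n. \<Sum>k<n. coaction i j y * (coaction j k x * e k c))"
      by (rule sum.swap)
    also have "\<dots> = (\<Sum>j<n. coaction i j y * comult_slice D (e j) x c)"
      by (rule sum.cong[OF refl]) (simp add: comult_slice_basis_apply sum_distrib_left)
    finally show ?thesis by (simp add: comult_slice_basis[OF i] comult_slice_combination)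
  qed
  moreover have "combination w c = comult_slice D (comult_slice D (e i) y) x c" for c
  proof -
    have "combination w c = (\<Sum>k<n. \<Sum>b\<in>coaction_support. D b x y * (coaction i k b * e k c))"
      unfolding combination_def w_def Sum_any_coaction
      by (simp add: sum_distrib_left sum_distrib_right mult_ac)
    also have "\<dots> = (\<Sum>b\<in>coaction_support. D b x y * (\<Sum>k<n. coaction i k b * e k c))"
      by (subst sum.swap) (simp add: sum_distrib_left)
    also have "\<dots> = comult_slice D (comult_slice D (e i) y) x c"
      by (simp add: comult_slice_basis_apply[OF i, symmetric]
          comult_slice_comult_slice[OF finite_basis_support basis_outside_support[OF i]])
    finally show ?thesis .
  qed
  moreover have "u \<in> fd_elems n" "w \<in> fd_elems n"
    by (auto simp: u_def w_def fd_elems_def coaction_vanishes)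
  ultimately have "u = w"
    using inj_onD[OF bij_betw_imp_inj_on[OF bij_betw_combination]] by (simp add: fun_eq_iff)
  then show ?thesis by (simp add: u_def w_def fun_eq_iff)
qed

lemma coaction_counit:
  assumes i: "i < n" and j: "j < n"
  shows "Sum_any (\<lambda>b. coaction i j b * eps b) = (if i = j then 1 else 0)"
proof -
  define u where "u j = Sum_any (\<lambda>b. coaction i j b * eps b)" for j
  define \<delta> where "\<delta> j = (if i = j then 1 else (0::'k))" for j
  have "combination u c = e i c" for c
  proof -
    have "combination u c = (\<Sum>k<n. \<Sum>b\<in>coaction_support. eps b * (coaction i k b * e k c))"
      unfolding combination_def u_def Sum_any_coaction
      by (simp add: sum_distrib_left sum_distrib_right mult_ac)
    also have "\<dots> = (\<Sum>b\<in>coaction_support. eps b * (\<Sum>k<n. coaction i k b * e k c))"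
      by (subst sum.swap) (simp add: sum_distrib_left)
    also have "\<dots> = e i c"
      by (simp add: comult_slice_basis_apply[OF i, symmetric]
          counit_comult_slice[OF finite_basis_support basis_outside_support[OF i]])
    finally show ?thesis .
  qed
  moreover have "combination \<delta> c = e i c" for c
  proof -
    have "combination \<delta> c = (\<Sum>k<n. if i = k then e k c else 0)"
      unfolding combination_def \<delta>_def by (rule sum.cong) auto
    then show ?thesis using i by simp
  qed
  moreover have "u \<in> fd_elems n" "\<delta> \<in> fd_elems n"
    using i by (auto simp: u_def \<delta>_def fd_elems_def coaction_vanishes)
  ultimately have "u = \<delta>"
    using inj_onD[OF bij_betw_imp_inj_on[OF bij_betw_combination]] by (simp add: fun_eq_iff)
  then show ?thesis using j by (simp add: u_def \<delta>_def fun_eq_iff)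
qed

lemma fd_comodule_coaction: "fd_comodule D eps n coaction"
  unfolding fd_comodule_def
proof (intro conjI allI impI)
  show "finite {b. coaction i j b \<noteq> 0}" for i j
    using finite_coaction_support coaction_outside_support by (auto intro: finite_subset)
qed (auto simp: coaction_vanishes coaction_coassoc coaction_counit)

lemma combination_act: "combination (comod_act n coaction f v) = coideal_act D f (combination v)"
proof
  fix c
  let ?t = "\<lambda>i j b. f b * (v i * (coaction i j b * e j c))"
  have "combination (comod_act n coaction f v) c = (\<Sum>j<n. \<Sum>i<n. \<Sum>b\<in>coaction_support. ?t i j b)"
    unfolding combination_def comod_act_def Sum_any_coaction
    by (simp add: sum_distrib_right sum_distrib_left mult_ac)
  also have "\<dots> = (\<Sum>i<n. \<Sum>j<n. \<Sum>b\<in>coaction_support. ?t i j b)"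
    by (rule sum.swap)
  also have "\<dots> = (\<Sum>i<n. \<Sum>b\<in>coaction_support. \<Sum>j<n. ?t i j b)"
    by (rule sum.cong[OF refl], rule sum.swap)
  also have "\<dots> = (\<Sum>b\<in>coaction_support. \<Sum>i<n. \<Sum>j<n. ?t i j b)"
    by (rule sum.swap)
  also have "\<dots> = (\<Sum>b\<in>coaction_support. f b * (\<Sum>i<n. v i * (\<Sum>j<n. coaction i j b * e j c)))"
    by (simp add: sum_distrib_left)
  also have "\<dots> = (\<Sum>b\<in>coaction_support. f b * comult_slice D (combination v) b c)"
    by (simp add: comult_slice_combination comult_slice_basis_apply)
  also have "\<dots> = coideal_act D f (combination v) c"
    by (rule coideal_act_eq_sum[OF finite_basis_support combination_outside_support
          finite_coaction_support subset_refl, symmetric])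
  finally show "combination (comod_act n coaction f v) c = coideal_act D f (combination v) c" .
qed

lemma embeds_in_free_coideal:
  assumes "embeds_in_free D (fd_elems n) (comod_act n coaction)"
  shows "embeds_in_free D I (coideal_act D)"
proof (rule embeds_in_free_pullback[OF assms])
  show "coords ` I \<subseteq> fd_elems n" using coords_in_fd_elems by auto
  show "inj_on coords I"
    unfolding coords_def by (rule bij_betw_imp_inj_on[OF bij_betw_the_inv_into[OF bij_betw_combination]])
  fix x y assume x: "x \<in> I" and y: "y \<in> I"
  have "coords (x + y) = coords (combination (coords x + coords y))"
    by (simp add: combination_add combination_coords x y)
  also have "\<dots> = coords x + coords y"
    using coords_in_fd_elems[OF x] coords_in_fd_elems[OF y]
    by (intro coords_combination) (simp add: fd_elems_def)
  finally show "coords (x + y) = coords x + coords y" .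
  fix f
  have "coords (coideal_act D f x) = coords (combination (comod_act n coaction f (coords x)))"
    by (simp add: combination_act combination_coords x)
  also have "\<dots> = comod_act n coaction f (coords x)"
    by (intro coords_combination) (simp add: comod_act_def fd_elems_def coaction_vanishes)
  finally show "coords (coideal_act D f x) = comod_act n coaction f (coords x)" .
qed

end

lemma right_coideal_embeds_in_free:
  assumes "coalgebra D eps" and "left_f_qcF D eps"
    and "right_coideal D I" and "fin_dim_subspace I"
  shows "embeds_in_free D I (coideal_act D)"
proof -
  obtain e and n :: nat where "I = vec.span (e ` {..<n})" "inj_on e {..<n}" "vec.independent (e ` {..<n})"
    using fin_dim_subspace_obtain_basis[OF \<open>fin_dim_subspace I\<close>] by blast
  with assms(1,3) interpret coideal_basis D eps I n e
    by (intro coideal_basis.intro coideal_basis_axioms.intro coalg.intro)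
  show ?thesis
    using assms(2) fd_comodule_coaction unfolding left_f_qcF_def by (blast intro: embeds_in_free_coideal)
qed

lemma fd_comodule_embeds_in_free:
  assumes "coalgebra D eps" and "fd_comodule D eps n R"
    and "\<forall>I. right_coideal D I \<and> fin_dim_subspace I \<longrightarrow> embeds_in_free D I (coideal_act D)"
  shows "embeds_in_free D (fd_elems n) (comod_act n R)"
proof -
  from assms(1,2) interpret fd_comod D eps n R
    by (intro fd_comod.intro coalg.intro fd_comod_axioms.intro)
  show ?thesis
    using assms(3) right_coideal_coefficient_space fin_dim_coefficient_space
    by (blast intro: embeds_in_free_comodule)
qed

theorem proposition3p9:
  fixes D :: "'b \<Rightarrow> 'b \<Rightarrow> 'b \<Rightarrow> 'k::field" and eps :: "'b \<Rightarrow> 'k"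
  assumes "coalgebra D eps"
  shows "left_f_qcF D eps \<longleftrightarrow>
    (\<forall>I. right_coideal D I \<and> fin_dim_subspace I \<longrightarrow> embeds_in_free D I (coideal_act D))"
  using right_coideal_embeds_in_free[OF assms] fd_comodule_embeds_in_free[OF assms]
  unfolding left_f_qcF_def by blast

end
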